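(* Let $N\ge2$, $k>0$, and $g(s)=|s|^{p-1}s$ with $p\ge\frac{N+1}{N-1}$. Then the problem $$-\Delta u+g(u)=2k\frac{\partial\delta_0}{\partial x_N}\ \text{ in } B_1(0),\qquad u=0\ \text{ on }\partial B_1(0)$$ has no $x_N$-odd very weak solution.
   Context: $B_1(0)$ is the open unit ball of $\mathbb{R}^N$. $\frac{\partial\delta_0}{\partial x_N}$ is the distribution $\langle\frac{\partial\delta_0}{\partial x_N},\zeta\rangle=\frac{\partial\zeta(0)}{\partial x_N}$. A function $u$ is $x_N$-odd if $u(x',x_N)=-u(x',-x_N)$. A function $u\in L^1(B_1(0))$ is a very weak solution if $g(u)$ is integrable in the principal value sense near the origin (i.e. $\lim_{\epsilon\to0^+}\int_{B_1(0)\setminus B_\epsilon(0)}g(u)\,dx$ exists), $g(u)\in L^1(B_1(0),|x|dx)$, and $\int_{B_1(0)}[u(-\Delta\xi)+g(u)\xi]\,dx=2k\frac{\partial\xi(0)}{\partial x_N}$ for all $\xi\in C^{1,1}_0(B_1(0))$. *)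

theory Defs
  imports "HOL-Analysis.Analysis"
begin

definition gpow :: "real \<Rightarrow> real \<Rightarrow> real" where
  "gpow p s = \<bar>s\<bar> powr (p - 1) * s"

definition pdiff :: "('a::euclidean_space \<Rightarrow> real) \<Rightarrow> 'a \<Rightarrow> 'a \<Rightarrow> real" where
  "pdiff f e x = frechet_derivative f (at x) e"

text \<open>Laplacian (sum of pure second partials); for C^{1,1} functions it is
  defined almost everywhere, which suffices inside Lebesgue integrals.\<close>
definition laplacian :: "('a::euclidean_space \<Rightarrow> real) \<Rightarrow> 'a \<Rightarrow> real" where
  "laplacian f x = (\<Sum>b\<in>Basis. pdiff (pdiff f b) b x)"

text \<open>C^{1,1}_0(B_1(0)): continuous on the closed ball, differentiable in the open
  ball with Lipschitz (hence uniformly continuous up to the boundary) first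
  derivatives, and vanishing on the boundary sphere.\<close>
definition C11_0_ball :: "('a::euclidean_space \<Rightarrow> real) \<Rightarrow> bool" where
  "C11_0_ball \<xi> \<longleftrightarrow>
     continuous_on (cball 0 1) \<xi> \<and>
     (\<forall>x\<in>ball 0 1. \<xi> differentiable (at x)) \<and>
     (\<exists>L. \<forall>b\<in>Basis. L-lipschitz_on (ball 0 1) (pdiff \<xi> b)) \<and>
     (\<forall>x\<in>sphere 0 1. \<xi> x = 0)"

definition reflect :: "'a::euclidean_space \<Rightarrow> 'a \<Rightarrow> 'a" where
  "reflect eN x = x - (2 * (x \<bullet> eN)) *\<^sub>R eN"

definition xN_odd :: "'a::euclidean_space \<Rightarrow> ('a \<Rightarrow> real) \<Rightarrow> bool" where
  "xN_odd eN u \<longleftrightarrow> (\<forall>x. u (reflect eN x) = - u x)"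

text \<open>The integral of g(u) xi is understood in the principal value sense
  (limit over B_1 \ B_eps), as required by the definition.\<close>
definition very_weak_solution ::
  "real \<Rightarrow> real \<Rightarrow> 'a::euclidean_space \<Rightarrow> ('a \<Rightarrow> real) \<Rightarrow> bool" where
  "very_weak_solution p k eN u \<longleftrightarrow>
     set_integrable lborel (ball 0 1) u \<and>
     (\<exists>I. ((\<lambda>\<epsilon>. set_lebesgue_integral lborel (ball 0 1 - ball 0 \<epsilon>) (\<lambda>x. gpow p (u x)))
            \<longlongrightarrow> I) (at_right 0)) \<and>
     set_integrable lborel (ball 0 1) (\<lambda>x. norm x * gpow p (u x)) \<and>
     (\<forall>\<xi>. C11_0_ball \<xi> \<longrightarrow>
        ((\<lambda>\<epsilon>. set_lebesgue_integral lborel (ball 0 1 - ball 0 \<epsilon>)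
                 (\<lambda>x. u x * (- laplacian \<xi> x) + gpow p (u x) * \<xi> x))
          \<longlongrightarrow> 2 * k * pdiff \<xi> eN 0) (at_right 0))"

end

theory Submission
  imports Defs
begin

text \<open>Test the equation with \<open>\<xi>\<^sub>r(x) = x\<^sub>N (1 - |x|^2/r^2)^3\<^sub>+\<close>, \<open>0 < r \<le> 1\<close>.
  Then \<open>\<partial>\<^sub>N\<xi>\<^sub>r(0) = 1\<close>, while \<open>\<xi>\<^sub>r\<close> and \<open>\<Delta>\<xi>\<^sub>r\<close> vanish off \<open>B\<^sub>r\<close> and are bounded
  there by \<open>|x|\<close> and \<open>C|x|/r^2\<close>. The Young-type bound
  \<open>|u|/r^2 \<le> s|u|^p + (s r^2)^(-1/(p-1)) / r^2\<close> then gives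
  \<open>2k \<le> (C s + 1) \<integral>\<^bsub>B\<^sub>r\<^esub> |x||u|^p + C |B\<^sub>1| s^(-1/(p-1)) r^(N-1-2/(p-1))\<close>.
  For \<open>p \<ge> (N+1)/(N-1)\<close> the power of \<open>r\<close> is nonnegative, so the last term is small once
  \<open>s\<close> is large, and then the first one is small for small \<open>r\<close> because \<open>|x||u|^p\<close> is
  integrable near the origin.\<close>

lemma has_real_derivative_cut_off_at_1:
  fixes f f' :: "real \<Rightarrow> real"
  assumes f: "\<And>t. (f has_real_derivative f' t) (at t)" and "f 1 = 0" and "f' 1 = 0"
  shows "((\<lambda>t. if t < 1 then f t else 0) has_real_derivative (if t < 1 then f' t else 0)) (at t)"
proof -
  have f_deriv: "(f has_derivative (\<lambda>h. h * f' x)) (at x)" for x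
    using f[of x] by (simp add: has_field_derivative_def mult_commute_abs)
  have "((\<lambda>t. if t \<in> {..<1} then f t else 0) has_derivative
      (if t \<in> {..<1} then (\<lambda>h. h * f' t) else (\<lambda>h. 0))) (at t within ({..<1} \<union> {1..}))"
    by (rule has_derivative_If_within_closures)
       (use f_deriv assms in \<open>auto intro: has_derivative_at_withinI\<close>)
  moreover have "{..<(1::real)} \<union> {1..} = UNIV" by auto
  ultimately show ?thesis
    by (auto simp: has_field_derivative_def fun_eq_iff elim!: has_derivative_eq_rhs)
qed

definition cutoff :: "real \<Rightarrow> real" where
  "cutoff t = (if t < 1 then (1 - t)^3 else 0)"
definition cutoff_d1 :: "real \<Rightarrow> real" where
  "cutoff_d1 t = (if t < 1 then -3 * (1 - t)^2 else 0)"
definition cutoff_d2 :: "real \<Rightarrow> real" where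
  "cutoff_d2 t = (if t < 1 then 6 * (1 - t) else 0)"

lemma cutoff_has_real_derivative: "(cutoff has_real_derivative cutoff_d1 t) (at t)"
  unfolding cutoff_def[abs_def] cutoff_d1_def
  by (rule has_real_derivative_cut_off_at_1) (auto intro!: derivative_eq_intros)

lemma cutoff_d1_has_real_derivative: "(cutoff_d1 has_real_derivative cutoff_d2 t) (at t)"
  unfolding cutoff_d1_def[abs_def] cutoff_d2_def
  by (rule has_real_derivative_cut_off_at_1) (auto intro!: derivative_eq_intros)

lemma cutoff_bounds:
  assumes "0 \<le> t"
  shows "\<bar>cutoff t\<bar> \<le> 1" and "\<bar>cutoff_d1 t\<bar> \<le> 3" and "\<bar>cutoff_d2 t\<bar> \<le> 6"
    and "\<bar>t * cutoff_d2 t\<bar> \<le> 6"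
  using assms mult_le_one[of t "1 - t"]
  by (auto simp: cutoff_def cutoff_d1_def cutoff_d2_def abs_mult power_le_one algebra_simps)

lemma cutoff_eq_0:
  "1 \<le> t \<Longrightarrow> cutoff t = 0" "1 \<le> t \<Longrightarrow> cutoff_d1 t = 0" "1 \<le> t \<Longrightarrow> cutoff_d2 t = 0"
  by (simp_all add: cutoff_def cutoff_d1_def cutoff_d2_def)

definition scaled_sqnorm :: "real \<Rightarrow> 'a::euclidean_space \<Rightarrow> real" where
  "scaled_sqnorm r x = (x \<bullet> x) / r^2"

lemma scaled_sqnorm_nonneg: "0 \<le> scaled_sqnorm r x"
  by (simp add: scaled_sqnorm_def)

lemma scaled_sqnorm_ge_1: "0 < r \<Longrightarrow> r \<le> norm x \<Longrightarrow> 1 \<le> scaled_sqnorm r x"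
  by (simp add: scaled_sqnorm_def power_mono flip: power2_norm_eq_inner)

lemma scaled_sqnorm_has_derivative:
  "(scaled_sqnorm r has_derivative (\<lambda>h. 2 * (x \<bullet> h) / r^2)) (at x)"
proof (cases "r = 0")
  case False
  then show ?thesis
    unfolding scaled_sqnorm_def[abs_def]
    by (auto intro!: derivative_eq_intros simp: inner_commute power2_eq_square fun_eq_iff)
qed (simp add: scaled_sqnorm_def[abs_def])

lemma has_derivative_comp_scaled_sqnorm:
  assumes "\<And>t. (f has_real_derivative f' t) (at t)"
  shows "((\<lambda>x. f (scaled_sqnorm r x)) has_derivative
           (\<lambda>h. f' (scaled_sqnorm r x) * (2 * (x \<bullet> h) / r^2))) (at x)"
  using has_derivative_compose[OF scaled_sqnorm_has_derivative assms[unfolded has_field_derivative_def]] .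

definition test_fun :: "real \<Rightarrow> 'a::euclidean_space \<Rightarrow> 'a \<Rightarrow> real" where
  "test_fun r e x = (x \<bullet> e) * cutoff (scaled_sqnorm r x)"

definition test_grad :: "real \<Rightarrow> 'a::euclidean_space \<Rightarrow> 'a \<Rightarrow> 'a \<Rightarrow> real" where
  "test_grad r e b x = (b \<bullet> e) * cutoff (scaled_sqnorm r x)
     + (x \<bullet> e) * (cutoff_d1 (scaled_sqnorm r x) * (2 * (x \<bullet> b) / r^2))"

definition test_hess :: "real \<Rightarrow> 'a::euclidean_space \<Rightarrow> 'a \<Rightarrow> 'a \<Rightarrow> 'a \<Rightarrow> real" where
  "test_hess r e b x h =
     (b \<bullet> e) * (cutoff_d1 (scaled_sqnorm r x) * (2 * (x \<bullet> h) / r^2))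
     + (h \<bullet> e) * (cutoff_d1 (scaled_sqnorm r x) * (2 * (x \<bullet> b) / r^2))
     + (x \<bullet> e) * (cutoff_d2 (scaled_sqnorm r x) * (2 * (x \<bullet> h) / r^2) * (2 * (x \<bullet> b) / r^2)
                    + cutoff_d1 (scaled_sqnorm r x) * (2 * (h \<bullet> b) / r^2))"

lemma test_fun_has_derivative: "(test_fun r e has_derivative (\<lambda>h. test_grad r e h x)) (at x)"
  unfolding test_fun_def[abs_def] test_grad_def
  by (rule derivative_eq_intros has_derivative_comp_scaled_sqnorm cutoff_has_real_derivative | simp)+
     (simp add: fun_eq_iff algebra_simps)

lemma test_grad_has_derivative:
  "r \<noteq> 0 \<Longrightarrow> (test_grad r e b has_derivative test_hess r e b x) (at x)"
  unfolding test_grad_def[abs_def] test_hess_def[abs_def]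
  by (rule derivative_eq_intros has_derivative_comp_scaled_sqnorm
        cutoff_has_real_derivative cutoff_d1_has_real_derivative | simp)+
     (auto simp: fun_eq_iff algebra_simps)

lemma pdiff_test_fun: "pdiff (test_fun r e) b = test_grad r e b"
  unfolding pdiff_def fun_eq_iff using frechet_derivative_at[OF test_fun_has_derivative] by metis

lemma pdiff_test_grad: "r \<noteq> 0 \<Longrightarrow> pdiff (test_grad r e b) b x = test_hess r e b x b"
  using frechet_derivative_at[OF test_grad_has_derivative] by (metis pdiff_def)

lemma laplacian_test_fun:
  fixes e x :: "'a::euclidean_space"
  assumes "r \<noteq> 0"
  defines "q \<equiv> scaled_sqnorm r x"
  shows "laplacian (test_fun r e) x
    = (x \<bullet> e) / r^2 * ((2 * real DIM('a) + 4) * cutoff_d1 q + 4 * q * cutoff_d2 q)"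
proof -
  have "laplacian (test_fun r e) x = (\<Sum>b\<in>Basis. test_hess r e b x b)"
    using assms by (simp add: laplacian_def pdiff_test_fun pdiff_test_grad)
  also have "\<dots> = 4 * cutoff_d1 q / r^2 * (\<Sum>b\<in>Basis. (x \<bullet> b) * (e \<bullet> b))
      + (x \<bullet> e) * (4 * cutoff_d2 q / r^2 / r^2 * (\<Sum>b\<in>Basis. (x \<bullet> b) * (x \<bullet> b))
                    + 2 * cutoff_d1 q / r^2 * (\<Sum>b\<in>(Basis::'a set). b \<bullet> b))"
    by (simp add: test_hess_def q_def sum.distrib sum_distrib_left sum_divide_distrib inner_commute algebra_simps)
  also have "\<dots> = 4 * cutoff_d1 q / r^2 * (x \<bullet> e)
      + (x \<bullet> e) * (4 * cutoff_d2 q / r^2 / r^2 * (x \<bullet> x) + 2 * cutoff_d1 q / r^2 * DIM('a))"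
    by (simp only: euclidean_inner[symmetric]) simp
  also have "\<dots> = (x \<bullet> e) / r^2 * ((2 * real DIM('a) + 4) * cutoff_d1 q + 4 * q * cutoff_d2 q)"
    using assms(1) by (simp add: q_def scaled_sqnorm_def field_simps power2_eq_square)
  finally show ?thesis .
qed

lemma test_fun_bound:
  fixes e x :: "'a::euclidean_space"
  assumes "0 < r" and "e \<in> Basis"
  shows "\<bar>test_fun r e x\<bar> \<le> norm x * indicator (ball 0 r) x"
proof (cases "norm x < r")
  case True
  have "\<bar>x \<bullet> e\<bar> \<le> norm x"
    using assms(2) by (simp add: Basis_le_norm)
  moreover have "\<bar>cutoff (scaled_sqnorm r x)\<bar> \<le> 1"
    by (rule cutoff_bounds(1)[OF scaled_sqnorm_nonneg])
  ultimately have "\<bar>test_fun r e x\<bar> \<le> norm x * 1"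
    unfolding test_fun_def abs_mult by (rule mult_mono') simp_all
  then show ?thesis
    using True by simp
next
  case False
  then show ?thesis
    using assms(1) by (simp add: test_fun_def scaled_sqnorm_ge_1 cutoff_eq_0)
qed

lemma laplacian_test_fun_bound:
  fixes e x :: "'a::euclidean_space"
  assumes "0 < r" and "e \<in> Basis"
  shows "\<bar>laplacian (test_fun r e) x\<bar> \<le> (6 * real DIM('a) + 36) * norm x / r^2 * indicator (ball 0 r) x"
proof (cases "norm x < r")
  case True
  define q where "q = scaled_sqnorm r x"
  have d1: "\<bar>cutoff_d1 q\<bar> \<le> 3" and d2: "\<bar>q * cutoff_d2 q\<bar> \<le> 6"
    unfolding q_def using cutoff_bounds(2,4)[OF scaled_sqnorm_nonneg] by auto
  have "\<bar>(2 * real DIM('a) + 4) * cutoff_d1 q\<bar> \<le> 6 * real DIM('a) + 12"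
    using mult_left_mono[OF d1, of "2 * real DIM('a) + 4"] by (simp add: abs_mult)
  moreover have "\<bar>4 * q * cutoff_d2 q\<bar> \<le> 24"
    using d2 by (simp add: abs_mult)
  ultimately have factor: "\<bar>(2 * real DIM('a) + 4) * cutoff_d1 q + 4 * q * cutoff_d2 q\<bar>
      \<le> 6 * real DIM('a) + 36"
    using abs_triangle_ineq[of "(2 * real DIM('a) + 4) * cutoff_d1 q" "4 * q * cutoff_d2 q"]
    by linarith
  have "\<bar>x \<bullet> e\<bar> \<le> norm x"
    using assms(2) by (simp add: Basis_le_norm)
  from mult_mono'[OF this factor]
  have "\<bar>(x \<bullet> e) * ((2 * real DIM('a) + 4) * cutoff_d1 q + 4 * q * cutoff_d2 q)\<bar>
      \<le> norm x * (6 * real DIM('a) + 36)"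
    by (simp add: abs_mult)
  then show ?thesis
    using True assms(1)
    by (simp add: laplacian_test_fun q_def abs_mult divide_right_mono mult.commute)
next
  case False
  then show ?thesis
    using assms(1) by (simp add: laplacian_test_fun scaled_sqnorm_ge_1 cutoff_eq_0)
qed

lemma test_hess_bound:
  fixes b e x h :: "'a::euclidean_space"
  assumes r: "0 < r" and b: "b \<in> Basis" and e: "e \<in> Basis"
  shows "\<bar>test_hess r e b x h\<bar> \<le> 42 / r * norm h"
proof (cases "norm x < r")
  case True
  define q where "q = scaled_sqnorm r x"
  have c1: "\<bar>cutoff_d1 q\<bar> \<le> 3" and c2: "\<bar>cutoff_d2 q\<bar> \<le> 6"
    unfolding q_def using cutoff_bounds(2,3)[OF scaled_sqnorm_nonneg] by auto
  have xh: "\<bar>x \<bullet> h\<bar> \<le> r * norm h"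
    using Cauchy_Schwarz_ineq2[of x h] mult_right_mono[of "norm x" r "norm h"] True by simp
  have xb: "\<bar>x \<bullet> b\<bar> \<le> r" and xe: "\<bar>x \<bullet> e\<bar> \<le> r"
    using True b e Basis_le_norm[of b x] Basis_le_norm[of e x] by auto
  have he: "\<bar>h \<bullet> e\<bar> \<le> norm h" and hb: "\<bar>h \<bullet> b\<bar> \<le> norm h" and be: "\<bar>b \<bullet> e\<bar> \<le> 1"
    using b e Basis_le_norm[of e h] Basis_le_norm[of b h] Basis_le_norm[of e b] by auto
  have t1: "\<bar>(b \<bullet> e) * cutoff_d1 q * (x \<bullet> h)\<bar> \<le> 1 * 3 * (r * norm h)"
    unfolding abs_mult using be c1 xh by (intro mult_mono) auto
  have t2: "\<bar>(h \<bullet> e) * cutoff_d1 q * (x \<bullet> b)\<bar> \<le> norm h * 3 * r"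
    unfolding abs_mult using he c1 xb by (intro mult_mono) auto
  have t3: "\<bar>(x \<bullet> e) * cutoff_d2 q * (x \<bullet> h) * (x \<bullet> b)\<bar> \<le> r * 6 * (r * norm h) * r"
    unfolding abs_mult using xe c2 xh xb r by (intro mult_mono) auto
  have t4: "\<bar>(x \<bullet> e) * cutoff_d1 q * (h \<bullet> b)\<bar> \<le> r * 3 * norm h"
    unfolding abs_mult using xe c1 hb by (intro mult_mono) auto
  have "\<bar>2 / r^2 * ((x \<bullet> e) * cutoff_d2 q * (x \<bullet> h) * (x \<bullet> b))\<bar> \<le> 2 / r^2 * (r * 6 * (r * norm h) * r)"
    using mult_left_mono[OF t3, of "2 / r^2"] by (simp add: abs_mult)
  also have "\<dots> = 12 * (r * norm h)"
    using r by (simp add: field_simps power2_eq_square)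
  finally have t3': "\<bar>2 / r^2 * ((x \<bullet> e) * cutoff_d2 q * (x \<bullet> h) * (x \<bullet> b))\<bar> \<le> 12 * (r * norm h)" .
  define S where "S = (b \<bullet> e) * cutoff_d1 q * (x \<bullet> h) + (h \<bullet> e) * cutoff_d1 q * (x \<bullet> b)
      + 2 / r^2 * ((x \<bullet> e) * cutoff_d2 q * (x \<bullet> h) * (x \<bullet> b)) + (x \<bullet> e) * cutoff_d1 q * (h \<bullet> b)"
  have abs4: "\<bar>a + b + c + d\<bar> \<le> \<bar>a\<bar> + \<bar>b\<bar> + \<bar>c\<bar> + \<bar>d\<bar>" for a b c d :: real
    by linarith
  have "\<bar>S\<bar> \<le> 1 * 3 * (r * norm h) + norm h * 3 * r + 12 * (r * norm h) + r * 3 * norm h"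
    unfolding S_def by (rule order_trans[OF abs4]) (intro add_mono t1 t2 t3' t4)
  also have "\<dots> = 21 * (r * norm h)"
    by (simp add: mult_ac)
  finally have "\<bar>S\<bar> \<le> 21 * (r * norm h)" .
  moreover have "test_hess r e b x h = 2 / r^2 * S"
    by (simp add: S_def test_hess_def q_def algebra_simps)
  ultimately have "\<bar>test_hess r e b x h\<bar> \<le> 2 / r^2 * (21 * (r * norm h))"
    by (simp add: abs_mult mult_left_mono del: times_divide_eq_left)
  also have "\<dots> = 42 / r * norm h"
    using r by (simp add: field_simps power2_eq_square power3_eq_cube)
  finally show ?thesis .
next
  case False
  then show ?thesis
    using r by (simp add: test_hess_def scaled_sqnorm_ge_1 cutoff_eq_0)
qed

lemma pdiff_test_fun_at_0: "e \<in> Basis \<Longrightarrow> pdiff (test_fun r e) e 0 = 1"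
  by (simp add: pdiff_test_fun test_grad_def scaled_sqnorm_def cutoff_def)

lemma C11_0_ball_test_fun:
  fixes e :: "'a::euclidean_space"
  assumes r: "0 < r" "r \<le> 1" and e: "e \<in> Basis"
  shows "C11_0_ball (test_fun r e)"
  unfolding C11_0_ball_def
proof (intro conjI ballI exI)
  show "continuous_on (cball 0 1) (test_fun r e)"
    by (intro continuous_at_imp_continuous_on ballI has_derivative_continuous[OF test_fun_has_derivative])
  show "test_fun r e differentiable at x" for x
    using test_fun_has_derivative unfolding differentiable_def by blast
  show "test_fun r e x = 0" if "x \<in> sphere 0 1" for x
    using that r by (simp add: test_fun_def scaled_sqnorm_ge_1 cutoff_eq_0)
  show "(42 / r)-lipschitz_on (ball 0 1) (pdiff (test_fun r e) b)" if b: "b \<in> Basis" for b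
  proof (rule lipschitz_onI)
    fix x y :: 'a
    assume x: "x \<in> ball 0 1" and y: "y \<in> ball 0 1"
    have "onorm (test_hess r e b z) \<le> 42 / r" for z
      using test_hess_bound[OF r(1) b e] by (intro onorm_le) simp
    then have "norm (test_grad r e b x - test_grad r e b y) \<le> 42 / r * norm (x - y)"
      using r by (intro differentiable_bound[OF convex_ball _ _ x y])
        (auto intro: has_derivative_at_withinI[OF test_grad_has_derivative])
    then show "dist (pdiff (test_fun r e) b x) (pdiff (test_fun r e) b y) \<le> 42 / r * dist x y"
      by (simp add: pdiff_test_fun dist_norm)
  qed (use r in simp)
qed

lemma abs_gpow: "\<bar>gpow p y\<bar> = \<bar>y\<bar> powr p"
  by (cases "y = 0") (simp_all add: gpow_def abs_mult powr_diff)

lemma le_mult_powr_plus: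
  fixes a p y :: real
  assumes p: "1 < p" and a: "0 < a" and y: "0 \<le> y"
  shows "y \<le> a * y powr p + a powr (- 1 / (p - 1))"
proof (cases "y \<le> a powr (- 1 / (p - 1))")
  case True
  moreover have "0 \<le> a * y powr p"
    using a by simp
  ultimately show ?thesis
    by linarith
next
  case False
  have "(a powr (- 1 / (p - 1))) powr (p - 1) = a powr (- 1 / (p - 1) * (p - 1))"
    by (rule powr_powr)
  also have "\<dots> = inverse a"
    using p a by (simp add: powr_minus)
  finally have "inverse a \<le> y powr (p - 1)"
    using False p powr_mono2[of "p - 1" "a powr (- 1 / (p - 1))" y] by simp
  then have "y \<le> a * (y powr (p - 1) * y)"
    using a y mult_right_mono[of "inverse a" "y powr (p - 1)" y]
    by (simp add: field_simps)
  also have "\<dots> = a * y powr p"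
  proof -
    have "0 < y"
      using False powr_ge_zero[of a "- 1 / (p - 1)"] by linarith
    then show ?thesis
      by (simp add: powr_diff)
  qed
  finally show ?thesis
    using powr_ge_zero[of a "- 1 / (p - 1)"] by linarith
qed

lemma test_integrand_bound:
  fixes e x :: "'a::euclidean_space" and y :: real
  assumes r: "0 < r" and e: "e \<in> Basis" and p: "1 < p" and s: "0 < s"
  defines "K \<equiv> 6 * real DIM('a) + 36" and "M \<equiv> (s * r^2) powr (- 1 / (p - 1))"
  shows "\<bar>y * - laplacian (test_fun r e) x + gpow p y * test_fun r e x\<bar>
    \<le> indicator (ball 0 r) x * ((K * s + 1) * (norm x * \<bar>y\<bar> powr p) + K * M / r)"
proof (cases "x \<in> ball 0 r")
  case True
  have lap: "\<bar>laplacian (test_fun r e) x\<bar> \<le> K * norm x / r^2"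
    using laplacian_test_fun_bound[OF r e, of x] True by (simp add: K_def)
  have xi: "\<bar>test_fun r e x\<bar> \<le> norm x"
    using test_fun_bound[OF r e, of x] True by simp
  have "\<bar>y\<bar> \<le> s * r^2 * \<bar>y\<bar> powr p + M"
    unfolding M_def using r s by (intro le_mult_powr_plus p) auto
  then have young: "\<bar>y\<bar> / r^2 \<le> s * \<bar>y\<bar> powr p + M / r^2"
    using r by (simp add: field_simps)
  have K: "0 \<le> K" "0 \<le> M"
    by (simp_all add: K_def M_def)
  have "\<bar>y * - laplacian (test_fun r e) x + gpow p y * test_fun r e x\<bar>
      \<le> \<bar>y\<bar> * \<bar>laplacian (test_fun r e) x\<bar> + \<bar>y\<bar> powr p * \<bar>test_fun r e x\<bar>"
    by (metis abs_minus_cancel abs_mult abs_triangle_ineq abs_gpow)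
  also have "\<dots> \<le> \<bar>y\<bar> * (K * norm x / r^2) + \<bar>y\<bar> powr p * norm x"
    by (intro add_mono mult_left_mono lap xi) auto
  also have "\<dots> = K * norm x * (\<bar>y\<bar> / r^2) + norm x * \<bar>y\<bar> powr p"
    by simp
  also have "\<dots> \<le> K * norm x * (s * \<bar>y\<bar> powr p + M / r^2) + norm x * \<bar>y\<bar> powr p"
    using K young by (intro add_mono mult_left_mono) auto
  also have "\<dots> = (K * s + 1) * (norm x * \<bar>y\<bar> powr p) + K * M * (norm x / r^2)"
    by (simp add: algebra_simps)
  also have "\<dots> \<le> (K * s + 1) * (norm x * \<bar>y\<bar> powr p) + K * M * (1 / r)"
    using True r K by (intro add_left_mono mult_left_mono)
      (auto simp: power2_eq_square divide_le_eq)
  finally show ?thesis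
    using True by simp
next
  case False
  then show ?thesis
    using laplacian_test_fun_bound[OF r e, of x] test_fun_bound[OF r e, of x] by simp
qed

lemma set_integral_small_balls_tendsto_0:
  fixes f :: "'a::euclidean_space \<Rightarrow> 'b::{banach, second_countable_topology}"
  assumes "set_integrable lborel (ball c 1) f"
  shows "(\<lambda>n. set_lebesgue_integral lborel (ball c (1 / Suc n)) f) \<longlonglongrightarrow> 0"
proof -
  have "decseq (\<lambda>n. ball c (1 / real (Suc n)))"
    by (intro decseq_SucI subset_ball) (simp add: frac_le)
  then have "(\<lambda>n. set_lebesgue_integral lborel (ball c (1 / Suc n)) f)
      \<longlonglongrightarrow> set_lebesgue_integral lborel (\<Inter>n. ball c (1 / Suc n)) f"
    using assms by (intro set_integral_cont_down) auto
  also have "(\<Inter>n. ball c (1 / real (Suc n))) = {c}"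
  proof (intro equalityI subsetI)
    fix x assume x: "x \<in> (\<Inter>n. ball c (1 / real (Suc n)))"
    show "x \<in> {c}"
    proof (rule ccontr)
      assume "x \<notin> {c}"
      then obtain n where "inverse (real (Suc n)) < dist c x"
        using reals_Archimedean[of "dist c x"] by auto
      moreover have "dist c x < inverse (real (Suc n))"
        using x by (simp add: divide_inverse)
      ultimately show False
        by simp
    qed
  qed auto
  also have "set_lebesgue_integral lborel {c} f = 0"
    unfolding set_lebesgue_integral_def
    by (rule integral_eq_zero_AE) (use AE_lborel_singleton[of c] in \<open>auto elim: eventually_mono\<close>)
  finally show ?thesis .
qed

lemma scaled_ball_measure_le:
  fixes r s p :: real
  assumes p: "1 < p" "2 / (p - 1) \<le> real DIM('a) - 1" and r: "0 < r" "r \<le> 1" and s: "0 < s"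
  shows "(s * r^2) powr (- 1 / (p - 1)) / r * measure lborel (ball (0::'a::euclidean_space) r)
    \<le> unit_ball_vol DIM('a) * s powr (- 1 / (p - 1))"
proof -
  define a where "a = - 1 / (p - 1)"
  have r2: "r^2 = r powr 2"
    using r by (simp add: powr_numeral)
  have "r powr (2 * a + DIM('a) - 1) = r powr (2 * a) * r powr DIM('a) / r powr 1"
    by (simp only: powr_add powr_diff)
  then have rN: "r powr (2 * a) / r * r ^ DIM('a) = r powr (2 * a + DIM('a) - 1)"
    using r by (simp add: powr_realpow)
  have "(s * r^2) powr a / r * r ^ DIM('a) = s powr a * (r powr 2) powr a / r * r ^ DIM('a)"
    unfolding r2 using r s by (simp add: powr_mult)
  also have "\<dots> = s powr a * (r powr (2 * a) / r * r ^ DIM('a))"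
    by (simp add: powr_powr)
  also have "\<dots> = s powr a * r powr (2 * a + DIM('a) - 1)"
    by (simp only: rN)
  also have "\<dots> \<le> s powr a"
  proof -
    have "0 \<le> 2 * a + DIM('a) - 1"
      using p unfolding a_def by (simp add: field_simps)
    then show ?thesis
      using r by (simp add: powr_le1 mult_left_le)
  qed
  finally have "(s * r^2) powr a / r * r ^ DIM('a) \<le> s powr a" .
  from mult_left_mono[OF this, of "unit_ball_vol DIM('a)"] show ?thesis
    using r by (simp add: content_ball a_def mult_ac)
qed

lemma supercritical_exponent:
  fixes n p :: real
  assumes n: "2 \<le> n" and p: "(n + 1) / (n - 1) \<le> p"
  shows "1 < p" and "2 / (p - 1) \<le> n - 1"
proof -
  have "(n + 1) / (n - 1) = 1 + 2 / (n - 1)"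
    using n by (simp add: field_simps)
  then have le: "2 / (n - 1) \<le> p - 1"
    using p by simp
  moreover have "0 < 2 / (n - 1)"
    using n by simp
  ultimately show "1 < p"
    by linarith
  from le n have "2 \<le> (p - 1) * (n - 1)"
    by (simp add: pos_divide_le_eq)
  then show "2 / (p - 1) \<le> n - 1"
    using \<open>1 < p\<close> by (simp add: pos_divide_le_eq mult.commute)
qed

lemma very_weak_solution_weighted_integrable:
  assumes "very_weak_solution p k e u"
  shows "set_integrable lborel (ball 0 1) (\<lambda>x. norm x * \<bar>u x\<bar> powr p)"
proof -
  have "set_integrable lborel (ball 0 1) (\<lambda>x. norm x * gpow p (u x))"
    using assms by (simp add: very_weak_solution_def)
  from set_integrable_abs[OF this] show ?thesis
    by (simp add: abs_mult abs_gpow)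
qed

lemma very_weak_solution_estimate:
  fixes u :: "'a::euclidean_space \<Rightarrow> real"
  assumes vws: "very_weak_solution p k e u" and e: "e \<in> Basis"
    and p: "1 < p" "2 / (p - 1) \<le> real DIM('a) - 1"
    and r: "0 < r" "r \<le> 1" and s: "0 < s"
  defines "K \<equiv> 6 * real DIM('a) + 36"
  shows "2 * k \<le> (K * s + 1) * set_lebesgue_integral lborel (ball 0 r) (\<lambda>x. norm x * \<bar>u x\<bar> powr p)
    + K * unit_ball_vol DIM('a) * s powr (- 1 / (p - 1))"
proof -
  define M where "M = (s * r^2) powr (- 1 / (p - 1))"
  define W where "W x = norm x * \<bar>u x\<bar> powr p" for x
  define R where "R x = indicator (ball 0 r) x * ((K * s + 1) * W x + K * M / r)" for x
  have "set_integrable lborel (ball 0 1) W"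
    using very_weak_solution_weighted_integrable[OF vws] by (simp add: W_def[abs_def])
  then have W_int: "set_integrable lborel (ball 0 r) W"
    by (rule set_integrable_subset) (use r in auto)
  have ball_int: "integrable lborel (indicator (ball (0::'a) r) :: 'a \<Rightarrow> real)"
    by (intro integrable_real_indicator emeasure_bounded_finite) auto
  have R_int: "integrable lborel R"
    using W_int ball_int unfolding R_def set_integrable_def
    by (simp add: distrib_left mult.left_commute[of _ "K * s + 1"])
  have R_nonneg: "0 \<le> R x" for x
    using r s by (simp add: R_def W_def K_def M_def)
  have "2 * k * pdiff (test_fun r e) e 0 \<le> integral\<^sup>L lborel R"
  proof (rule tendsto_le[OF trivial_limit_at_right_real tendsto_const])
    show "((\<lambda>\<epsilon>. set_lebesgue_integral lborel (ball 0 1 - ball 0 \<epsilon>)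
        (\<lambda>x. u x * - laplacian (test_fun r e) x + gpow p (u x) * test_fun r e x))
        \<longlongrightarrow> 2 * k * pdiff (test_fun r e) e 0) (at_right 0)"
      using vws C11_0_ball_test_fun[OF r e] by (simp add: very_weak_solution_def)
    show "\<forall>\<^sub>F \<epsilon> in at_right 0. set_lebesgue_integral lborel (ball 0 1 - ball 0 \<epsilon>)
        (\<lambda>x. u x * - laplacian (test_fun r e) x + gpow p (u x) * test_fun r e x) \<le> integral\<^sup>L lborel R"
      unfolding set_lebesgue_integral_def
    proof (intro always_eventually allI integral_mono' R_int R_nonneg)
      show "indicator (ball 0 1 - ball 0 \<epsilon>) x *\<^sub>R
          (u x * - laplacian (test_fun r e) x + gpow p (u x) * test_fun r e x) \<le> R x" for \<epsilon> x
        using test_integrand_bound[OF r(1) e p(1) s, of "u x" x] R_nonneg[of x]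
        by (auto simp: R_def W_def K_def M_def indicator_def)
    qed
  qed
  also have "integral\<^sup>L lborel R = (K * s + 1) * set_lebesgue_integral lborel (ball 0 r) W
      + K * (M / r * measure lborel (ball (0::'a) r))"
    using W_int ball_int unfolding R_def set_integrable_def set_lebesgue_integral_def
    by (simp add: distrib_left mult.left_commute[of _ "K * s + 1"])
  also have "\<dots> \<le> (K * s + 1) * set_lebesgue_integral lborel (ball 0 r) W
      + K * (unit_ball_vol DIM('a) * s powr (- 1 / (p - 1)))"
    using scaled_ball_measure_le[OF p r s] unfolding M_def K_def
    by (intro add_left_mono mult_left_mono) auto
  finally show ?thesis
    using pdiff_test_fun_at_0[OF e] by (simp add: W_def[abs_def] mult.assoc)
qed

theorem theorem1p2:
  fixes p k :: real and eN :: "'a::euclidean_space"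
  assumes "DIM('a) \<ge> 2"
    and "eN \<in> Basis"
    and "k > 0"
    and "p \<ge> (real DIM('a) + 1) / (real DIM('a) - 1)"
  shows "\<not> (\<exists>u :: 'a \<Rightarrow> real. xN_odd eN u \<and> very_weak_solution p k eN u)"
proof
  assume "\<exists>u :: 'a \<Rightarrow> real. xN_odd eN u \<and> very_weak_solution p k eN u"
  then obtain u :: "'a \<Rightarrow> real" where vws: "very_weak_solution p k eN u"
    by blast
  have p: "1 < p" "2 / (p - 1) \<le> real DIM('a) - 1"
    using supercritical_exponent[OF _ assms(4)] assms(1) by auto
  define K where "K = 6 * real DIM('a) + 36"
  define T where "T r = set_lebesgue_integral lborel (ball 0 r) (\<lambda>x. norm x * \<bar>u x\<bar> powr p)" for r
  have "((\<lambda>s. K * unit_ball_vol DIM('a) * s powr (- 1 / (p - 1))) \<longlongrightarrow> 0) at_top"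
    using p by (auto intro!: tendsto_mult_right_zero tendsto_neg_powr filterlim_ident)
  then have "\<forall>\<^sub>F s in at_top. 0 < s \<and> K * unit_ball_vol DIM('a) * s powr (- 1 / (p - 1)) < k"
    using assms(3) by (intro eventually_conj eventually_gt_at_top order_tendstoD(2))
  then obtain s where s: "0 < s" "K * unit_ball_vol DIM('a) * s powr (- 1 / (p - 1)) < k"
    using eventually_happens'[OF trivial_limit_at_top_linorder] by blast
  have "(\<lambda>n. (K * s + 1) * T (1 / Suc n)) \<longlonglongrightarrow> 0"
    unfolding T_def
    by (intro tendsto_mult_right_zero set_integral_small_balls_tendsto_0
        very_weak_solution_weighted_integrable[OF vws])
  then have "\<forall>\<^sub>F n in sequentially. (K * s + 1) * T (1 / Suc n) < k"
    using assms(3) by (rule order_tendstoD(2))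
  then obtain n where "(K * s + 1) * T (1 / Suc n) < k"
    using eventually_happens'[OF sequentially_bot] by blast
  moreover have "2 * k \<le> (K * s + 1) * T (1 / Suc n) + K * unit_ball_vol DIM('a) * s powr (- 1 / (p - 1))"
    unfolding T_def K_def by (rule very_weak_solution_estimate[OF vws assms(2) p _ _ s(1)]) auto
  ultimately show False
    using s(2) by linarith
qed

end
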